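(* Let $n\ge3$, $\emptyset\ne S\subseteq\{1,\dots,n-1\}$, $\mathfrak p:=\sum_{i\in S}\mathfrak p_i'$. Then $E_\infty(\mathbb S_{CI})\subseteq E_\infty(\mathbb S_{n-1},\mathfrak p)$ for every $I\in\mathcal J(\mathfrak p)$ with $2\le|I|\le n-1$, and $U_I(K)\subseteq E_\infty(\mathbb S_{n-1},\mathfrak p)$ for every $I\in\mathcal J(\mathfrak p)$ with $3\le|I|\le n-1$. In particular $\widetilde{\mathcal E}_{n,s}(\mathfrak p)\subseteq E_\infty(\mathbb S_{n-1},\mathfrak p)$ for $s=3,\dots,n-1$.
   Context: $K$ is a field, $\mathbb N=\{0,1,\dots\}$. $\mathbb S_n$: $K$-algebra generated by $x_1,\dots,x_n,y_1,\dots,y_n$ with relations $y_ix_i=1$, $[x_i,y_j]=[x_i,x_j]=[y_i,y_j]=0$ ($i\ne j$). $E_{st}(i):=x_i^sy_i^t-x_i^{s+1}y_i^{t+1}$, $e_i:=E_{00}(i)$, $e_I:=\prod_{i\in I}e_i$, $E_{\alpha\beta}(I):=\prod_{i\in I}E_{\alpha_i\beta_i}(i)$. $\mathfrak p_n$ = ideal of $\mathbb S_n$ generated by $e_n$. $\mathbb S_{n-1}$ = subalgebra generated by $x_k,y_k$, $k<n$; $\mathfrak p_i'$ = ideal of $\mathbb S_{n-1}$ generated by $e_i$. $\mathrm{GL}_\infty(\mathbb S_{n-1})$ is identified with the group of units of $\mathbb S_n$ in $1+\mathfrak p_n$ via $(a_{kl})\mapsto 1+\sum(a_{kl}-\delta_{kl})E_{kl}(n)$.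 $E_\infty(\mathbb S_{n-1},\mathfrak p)$ is the relative elementary group, the normal subgroup of $E_\infty(\mathbb S_{n-1})$ generated by the elements $1+aE_{kl}(n)$ with $a\in\mathfrak p$, $k\ne l$. $\mathcal J(\mathfrak p):=\{J\subseteq\{1,\dots,n\}: n\in J,\ J\cap S\ne\emptyset\}$. $\mu_I(\lambda):=\lambda e_I+1-e_I$, $U_I(K):=\{\mu_I(\lambda):\lambda\in K^*\}$; $\mathbb S_{CI}$ = subalgebra generated by $x_k,y_k$, $k\notin I$; $E_\infty(\mathbb S_{CI})$ = subgroup of $\mathbb S_n^*$ generated by $1+aE_{\alpha\beta}(I)$, $a\in\mathbb S_{CI}$, $\alpha\ne\beta\in\mathbb N^I$. $\widetilde{\mathcal E}_{n,s}(\mathfrak p)$ = set of products, in a fixed order over all $I\in\mathcal J(\mathfrak p)$ with $|I|=s$, of elements of $U_I(K)E_\infty(\mathbb S_{CI})$. *)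

theory Defs
  imports Main
begin

text \<open>Concrete model of the Jacobson algebra S_n: its faithful representation on functions
  of multi-indices (nat => nat) => K.  Generator x_i shifts up in coordinate i, y_i shifts down;
  y_i x_i = 1.  Elements of algebras are operators; product = composition, 1 = id.\<close>

type_synonym 'k vec = "(nat \<Rightarrow> nat) \<Rightarrow> 'k"
type_synonym 'k op = "'k vec \<Rightarrow> 'k vec"

definition Xop :: "nat \<Rightarrow> 'k::field op" where
  "Xop i v = (\<lambda>m. if 0 < m i then v (m(i := m i - 1)) else 0)"

definition Yop :: "nat \<Rightarrow> 'k::field op" where
  "Yop i v = (\<lambda>m. v (m(i := m i + 1)))"

definition opadd :: "'k::field op \<Rightarrow> 'k op \<Rightarrow> 'k op" where
  "opadd A B = (\<lambda>v m. A v m + B v m)"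

definition opsub :: "'k::field op \<Rightarrow> 'k op \<Rightarrow> 'k op" where
  "opsub A B = (\<lambda>v m. A v m - B v m)"

definition opsmult :: "'k::field \<Rightarrow> 'k op \<Rightarrow> 'k op" where
  "opsmult c A = (\<lambda>v m. c * A v m)"

definition opzero :: "'k::field op" where
  "opzero = (\<lambda>v m. 0)"

inductive_set alg_gen :: "'k::field op set \<Rightarrow> 'k op set" for G where
  gen: "g \<in> G \<Longrightarrow> g \<in> alg_gen G"
| one: "id \<in> alg_gen G"
| zero: "opzero \<in> alg_gen G"
| add: "a \<in> alg_gen G \<Longrightarrow> b \<in> alg_gen G \<Longrightarrow> opadd a b \<in> alg_gen G"
| smult: "a \<in> alg_gen G \<Longrightarrow> opsmult c a \<in> alg_gen G"
| mult: "a \<in> alg_gen G \<Longrightarrow> b \<in> alg_gen G \<Longrightarrow> a \<circ> b \<in> alg_gen G"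

definition SS :: "nat set \<Rightarrow> 'k::field op set" where
  "SS A = alg_gen ({Xop i | i. i \<in> A} \<union> {Yop i | i. i \<in> A})"

definition Sn :: "nat \<Rightarrow> 'k::field op set" where
  "Sn n = SS {1..n}"

definition S_C :: "nat \<Rightarrow> nat set \<Rightarrow> 'k::field op set" where
  "S_C n I = SS ({1..n} - I)"

definition Est :: "nat \<Rightarrow> nat \<Rightarrow> nat \<Rightarrow> 'k::field op" where
  "Est s t i = opsub ((Xop i ^^ s) \<circ> (Yop i ^^ t)) ((Xop i ^^ (s+1)) \<circ> (Yop i ^^ (t+1)))"

definition ee :: "nat \<Rightarrow> 'k::field op" where
  "ee i = Est 0 0 i"

text \<open>Products over a finite index set I (factors commute; taken in increasing order).\<close>
definition eI :: "nat set \<Rightarrow> 'k::field op" where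
  "eI I = foldr (\<circ>) (map ee (sorted_list_of_set I)) id"

definition EabI :: "(nat \<Rightarrow> nat) \<Rightarrow> (nat \<Rightarrow> nat) \<Rightarrow> nat set \<Rightarrow> 'k::field op" where
  "EabI \<alpha> \<beta> I = foldr (\<circ>) (map (\<lambda>i. Est (\<alpha> i) (\<beta> i) i) (sorted_list_of_set I)) id"

inductive_set ideal_gen :: "'k::field op set \<Rightarrow> 'k op \<Rightarrow> 'k op set" for R a where
  zero: "opzero \<in> ideal_gen R a"
| gen: "r \<in> R \<Longrightarrow> s \<in> R \<Longrightarrow> r \<circ> a \<circ> s \<in> ideal_gen R a"
| add: "u \<in> ideal_gen R a \<Longrightarrow> w \<in> ideal_gen R a \<Longrightarrow> opadd u w \<in> ideal_gen R a"

inductive_set add_span :: "'k::field op set \<Rightarrow> 'k op set" for A where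
  zero: "opzero \<in> add_span A"
| gen: "a \<in> A \<Longrightarrow> a \<in> add_span A"
| add: "u \<in> add_span A \<Longrightarrow> w \<in> add_span A \<Longrightarrow> opadd u w \<in> add_span A"

definition p'_ideal :: "nat \<Rightarrow> nat \<Rightarrow> 'k::field op set" where
  "p'_ideal n i = ideal_gen (Sn (n - 1)) (ee i)"

definition pS :: "nat \<Rightarrow> nat set \<Rightarrow> 'k::field op set" where
  "pS n S = add_span (\<Union>i\<in>S. p'_ideal n i)"

inductive_set grp_gen :: "'k::field op set \<Rightarrow> 'k op set" for G where
  one: "id \<in> grp_gen G"
| gen: "g \<in> G \<Longrightarrow> g \<in> grp_gen G"
| inv: "g \<in> G \<Longrightarrow> inv g \<in> grp_gen G"
| mult: "a \<in> grp_gen G \<Longrightarrow> b \<in> grp_gen G \<Longrightarrow> a \<circ> b \<in> grp_gen G"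

text \<open>E_infty(S_{n-1}) inside S_n^*: generated by 1 + a E_{kl}(n), a in S_{n-1}, k ~= l.\<close>
definition Einf :: "nat \<Rightarrow> 'k::field op set" where
  "Einf n = grp_gen {opadd id (a \<circ> Est k l n) | a k l. a \<in> Sn (n - 1) \<and> k \<noteq> l}"

definition Einf_rel :: "nat \<Rightarrow> 'k::field op set \<Rightarrow> 'k op set" where
  "Einf_rel n p = grp_gen {h \<circ> opadd id (a \<circ> Est k l n) \<circ> inv h | h a k l.
      h \<in> Einf n \<and> a \<in> p \<and> k \<noteq> l}"

definition Einf_C :: "nat \<Rightarrow> nat set \<Rightarrow> 'k::field op set" where
  "Einf_C n I = grp_gen {opadd id (a \<circ> EabI \<alpha> \<beta> I) | a \<alpha> \<beta>.
      a \<in> S_C n I \<and> (\<exists>i\<in>I. \<alpha> i \<noteq> \<beta> i)}"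

definition muI :: "nat set \<Rightarrow> 'k::field \<Rightarrow> 'k op" where
  "muI I c = opadd (opsmult c (eI I)) (opsub id (eI I))"

definition U_I :: "nat set \<Rightarrow> 'k::field op set" where
  "U_I I = {muI I c | c. c \<noteq> 0}"

definition JJ :: "nat \<Rightarrow> nat set \<Rightarrow> nat set set" where
  "JJ n S = {J. J \<subseteq> {1..n} \<and> n \<in> J \<and> J \<inter> S \<noteq> {}}"

definition Etilde :: "nat \<Rightarrow> nat set \<Rightarrow> nat \<Rightarrow> 'k::field op set" where
  "Etilde n S s = {foldr (\<circ>) (map g L) id | L g.
      distinct L \<and> set L = {I \<in> JJ n S. card I = s} \<and>
      (\<forall>I\<in>set L. \<exists>u\<in>U_I I. \<exists>h\<in>Einf_C n I. g I = u \<circ> h)}"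

end

theory Submission
  imports Defs
begin

text \<open>
  Fix i \<in> I \<inter> S. A generator 1 + a E_{\<alpha>\<beta>}(I) of E_\<infinity>(S_{CI}) equals 1 + c E_{\<alpha>_n \<beta>_n}(n) with
  c = a E_{\<alpha>\<beta>}(I - {n}), and c \<in> p_i' because E_{\<alpha>\<beta>}(I - {n}) factors through e_i.  If
  \<alpha>_n \<noteq> \<beta>_n this is a generator of the relative group; if \<alpha>_n = \<beta>_n = t it is the commutator of
  1 + c E_{t,t+1}(n) with 1 + E_{\<beta>\<beta>}(I - {n}) E_{t+1,t}(n), and the relative group is normal in
  E_\<infinity>(S_{n-1}).

  For |I| \<ge> 3 choose j \<in> I distinct from n and i, and put F = I - {j, n}, D = \<mu>_{F \<union> {n}}(\<lambda>).
  Then \<mu>_I(\<lambda>) is the commutator of D with a product P of six elementary transvections with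
  coefficients in K[x_j, y_j], and the commutator of D with each of them is again a transvection,
  whose coefficient lies in e_F S_{n-1} \<subseteq> p_i'.
\<close>

section \<open>Coordinate formulas for the operators\<close>

lemma Xop_pow_apply: "(Xop i ^^ s) v = (\<lambda>m. if s \<le> m i then v (m(i := m i - s)) else 0)"
proof (induction s arbitrary: v)
  case (Suc s) show ?case
    unfolding funpow_Suc_right o_apply Suc.IH by (auto simp: fun_eq_iff Xop_def)
qed (simp add: fun_eq_iff)

lemma Yop_pow_apply: "(Yop i ^^ t) v = (\<lambda>m. v (m(i := m i + t)))"
proof (induction t arbitrary: v)
  case (Suc t) show ?case
    unfolding funpow_Suc_right o_apply Suc.IH by (auto simp: fun_eq_iff Yop_def intro!: arg_cong[where f=v])
qed (simp add: fun_eq_iff)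

lemma Est_apply: "Est s t i v = (\<lambda>m. if m i = s then v (m(i := t)) else 0)"
  by (auto simp: fun_eq_iff Est_def opsub_def Xop_pow_apply Yop_pow_apply simp del: funpow.simps
      intro!: arg_cong[where f=v])

lemma foldr_Est_apply:
  "distinct L \<Longrightarrow> foldr (\<circ>) (map (\<lambda>i. Est (\<alpha> i) (\<beta> i) i) L) id v
     = (\<lambda>m. if \<forall>k\<in>set L. m k = \<alpha> k then v (override_on m \<beta> (set L)) else (0::'k::field))"
proof (induction L arbitrary: v)
  case (Cons a L)
  have override: "override_on (m(a := \<beta> a)) \<beta> (set L) = override_on m \<beta> (set (a # L))" for m
    by (auto simp: override_on_def)
  show ?case using Cons by (auto simp: fun_eq_iff Est_apply override)
qed (simp add: fun_eq_iff)

lemma EabI_apply: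
  "finite I \<Longrightarrow> (EabI \<alpha> \<beta> I :: 'k::field op) v
     = (\<lambda>m. if \<forall>k\<in>I. m k = \<alpha> k then v (override_on m \<beta> I) else 0)"
proof -
  assume "finite I"
  then have set_eq: "set (sorted_list_of_set I) = I" by simp
  show ?thesis unfolding EabI_def foldr_Est_apply[OF distinct_sorted_list_of_set] set_eq ..
qed

lemma eI_eq_EabI: "eI I = EabI (\<lambda>_. 0) (\<lambda>_. 0) I"
  unfolding eI_def EabI_def ee_def ..

lemma eI_apply: "finite I \<Longrightarrow> (eI I :: 'k::field op) v = (\<lambda>m. if \<forall>k\<in>I. m k = 0 then v m else 0)"
  by (auto simp: eI_eq_EabI EabI_apply fun_eq_iff override_on_def intro!: arg_cong[where f=v])

lemma muI_apply:
  "finite I \<Longrightarrow> (muI I c :: 'k::field op) v = (\<lambda>m. (if \<forall>k\<in>I. m k = 0 then c else 1) * v m)"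
  by (rule ext) (simp add: muI_def opadd_def opsmult_def opsub_def eI_apply)

lemma EabI_insert:
  "finite J \<Longrightarrow> i \<notin> J \<Longrightarrow>
     (EabI \<alpha> \<beta> (insert i J) :: 'k::field op) = EabI \<alpha> \<beta> J \<circ> Est (\<alpha> i) (\<beta> i) i"
proof -
  assume J: "finite J" "i \<notin> J"
  then have "override_on m \<beta> J i = m i"
    and upd: "(override_on m \<beta> J)(i := \<beta> i) = override_on m \<beta> (insert i J)" for m
    by (auto simp: override_on_def)
  with J show ?thesis by (auto simp: fun_eq_iff EabI_apply Est_apply simp flip: upd)
qed

lemma EabI_comp_EabI:
  "finite J \<Longrightarrow> (EabI \<alpha> \<beta> J :: 'k::field op) \<circ> EabI \<gamma> \<delta> J
     = (if \<forall>k\<in>J. \<beta> k = \<gamma> k then EabI \<alpha> \<delta> J else opzero)"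
proof -
  have twice: "override_on (override_on m \<beta> J) \<delta> J = override_on m \<delta> J"
    and "k \<in> J \<Longrightarrow> override_on m \<beta> J k = \<beta> k" for m k
    by (auto simp: override_on_def)
  then show "finite J \<Longrightarrow> ?thesis" by (auto simp: fun_eq_iff EabI_apply opzero_def twice)
qed

lemma Est_comp_Est: "Est s t j \<circ> Est u w j = (if t = u then Est s w j else opzero)"
  by (auto simp: fun_eq_iff Est_apply opzero_def)

lemma Est_eq_Xop_ee_Yop: "Est s t i = (Xop i ^^ s) \<circ> ee i \<circ> (Yop i ^^ t)"
  by (auto simp: fun_eq_iff ee_def Est_apply Xop_pow_apply Yop_pow_apply simp del: funpow.simps
      intro!: arg_cong[where f=v])

lemma opzero_comp [simp]: "opzero \<circ> f = opzero"
  by (simp add: fun_eq_iff opzero_def)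

lemma opsmult_comp: "opsmult c (A \<circ> B) = opsmult c A \<circ> B"
  by (simp add: fun_eq_iff opsmult_def)

lemma opsmult_one [simp]: "opsmult 1 A = A"
  by (simp add: opsmult_def)

section \<open>Linearity, commutation and unipotent operators\<close>

text \<open>Composition distributes over opadd and opsmult from the left only for linear operators, and
  linearity is not built into the type of operators.\<close>

definition op_linear :: "'k::field op \<Rightarrow> bool" where
  "op_linear A \<longleftrightarrow> (\<forall>v w. A (\<lambda>m. v m + w m) = (\<lambda>m. A v m + A w m)) \<and>
                   (\<forall>c v. A (\<lambda>m. c * v m) = (\<lambda>m. c * A v m))"

lemma op_linear_add: "op_linear A \<Longrightarrow> A (\<lambda>m. v m + w m) = (\<lambda>m. A v m + A w m)"
  by (simp add: op_linear_def)

lemma op_linear_smult: "op_linear A \<Longrightarrow> A (\<lambda>m. c * v m) = (\<lambda>m. c * A v m)"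
  by (simp add: op_linear_def)

lemma op_linear_zero: "op_linear A \<Longrightarrow> A (\<lambda>m. 0) = (\<lambda>m. 0)"
  using op_linear_smult[of A 0 "\<lambda>m. 0"] by simp

lemma op_linear_neg: "op_linear A \<Longrightarrow> A (\<lambda>m. - v m) = (\<lambda>m. - A v m)"
  using op_linear_smult[of A "-1" v] by simp

lemma op_linear_diff: "op_linear A \<Longrightarrow> A (\<lambda>m. v m - w m) = (\<lambda>m. A v m - A w m)"
  using op_linear_add[of A v "\<lambda>m. - w m"] by (simp add: op_linear_neg)

lemma op_linear_comp: "op_linear A \<Longrightarrow> op_linear B \<Longrightarrow> op_linear (A \<circ> B)"
  by (simp add: op_linear_def)

lemma op_linear_Est: "op_linear (Est s t i)"
  by (auto simp: op_linear_def Est_apply fun_eq_iff)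

lemma op_linear_EabI: "finite J \<Longrightarrow> op_linear (EabI \<alpha> \<beta> J)"
  by (auto simp: op_linear_def EabI_apply fun_eq_iff)

lemma op_linear_alg_gen: "a \<in> alg_gen G \<Longrightarrow> \<forall>g\<in>G. op_linear g \<Longrightarrow> op_linear a"
  by (induction rule: alg_gen.induct)
     (auto simp: op_linear_def opadd_def opsmult_def opzero_def algebra_simps)

lemma op_linear_Xop: "op_linear (Xop i)"
  by (auto simp: op_linear_def Xop_def fun_eq_iff)

lemma op_linear_Yop: "op_linear (Yop i)"
  by (auto simp: op_linear_def Yop_def fun_eq_iff)

lemma op_linear_SS: "a \<in> SS T \<Longrightarrow> op_linear a"
  unfolding SS_def by (erule op_linear_alg_gen) (auto simp: op_linear_Xop op_linear_Yop)

lemma alg_gen_commute: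
  "a \<in> alg_gen G \<Longrightarrow> \<forall>g\<in>G. g \<circ> B = B \<circ> g \<Longrightarrow> op_linear B \<Longrightarrow> a \<circ> B = B \<circ> a"
proof (induction rule: alg_gen.induct)
  case zero
  then show ?case by (simp add: fun_eq_iff opzero_def op_linear_zero)
next
  case (add a b)
  then show ?case by (simp add: fun_eq_iff opadd_def op_linear_add)
next
  case (smult a c)
  then show ?case by (simp add: fun_eq_iff opsmult_def op_linear_smult)
next
  case (mult a b)
  then have "a (B x) = B (a x)" "b (B x) = B (b x)" for x
    by (metis comp_apply)+
  then show ?case by (simp add: comp_def)
qed auto

lemma SS_commute_Est: "a \<in> SS T \<Longrightarrow> j \<notin> T \<Longrightarrow> a \<circ> Est s t j = Est s t j \<circ> a"
  unfolding SS_def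
proof (erule alg_gen_commute)
  assume "j \<notin> T"
  then have "Xop i \<circ> Est s t j = Est s t j \<circ> Xop i" "Yop i \<circ> Est s t j = Est s t j \<circ> Yop i" if "i \<in> T" for i
    using that by (auto simp: fun_eq_iff Xop_def Yop_def Est_apply fun_upd_twist)
  then show "\<forall>g\<in>{Xop i |i. i \<in> T} \<union> {Yop i |i. i \<in> T}. g \<circ> Est s t j = Est s t j \<circ> g"
    by blast
qed (rule op_linear_Est)

lemma foldr_comp_commute: "\<forall>g\<in>set L. a \<circ> g = g \<circ> a \<Longrightarrow> a \<circ> foldr (\<circ>) L id = foldr (\<circ>) L id \<circ> a"
  by (induction L) (auto simp: fun_eq_iff)

lemma SS_commute_EabI:
  "a \<in> SS T \<Longrightarrow> finite J \<Longrightarrow> J \<inter> T = {} \<Longrightarrow> a \<circ> EabI \<alpha> \<beta> J = EabI \<alpha> \<beta> J \<circ> a"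
  unfolding EabI_def by (rule foldr_comp_commute) (auto intro!: SS_commute_Est)

lemma comp_opzero: "op_linear a \<Longrightarrow> a \<circ> opzero = opzero"
  by (simp add: fun_eq_iff opzero_def op_linear_zero)

lemma comp_square_zero:
  assumes "op_linear a" "a \<circ> E = E \<circ> a" "E \<circ> E = opzero"
  shows "(a \<circ> E) \<circ> (a \<circ> E) = opzero"
proof -
  have comm: "a (E x) = E (a x)" and square: "E (E x) = (\<lambda>m. 0)" for x
    using assms(2,3) by (metis comp_apply opzero_def)+
  show ?thesis by (simp add: fun_eq_iff opzero_def comm square op_linear_zero[OF assms(1)])
qed

lemma unipotent_inverse:
  assumes "op_linear X" "X \<circ> X = opzero"
  shows "opadd id X \<circ> opadd id (opsmult (-1) X) = id"
    and "opadd id (opsmult (-1) X) \<circ> opadd id X = id"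
proof -
  have square: "X (X v) = (\<lambda>m. 0)" for v using assms(2) by (metis comp_apply opzero_def)
  show "opadd id X \<circ> opadd id (opsmult (-1) X) = id"
    and "opadd id (opsmult (-1) X) \<circ> opadd id X = id"
    by (simp_all add: square fun_eq_iff opadd_def opsmult_def op_linear_add[OF assms(1)]
        op_linear_smult[OF assms(1)] op_linear_neg[OF assms(1)] op_linear_diff[OF assms(1)])
qed

lemma unipotent_bij: "op_linear X \<Longrightarrow> X \<circ> X = opzero \<Longrightarrow> bij (opadd id X)"
  using unipotent_inverse by (metis o_bij)

lemma unipotent_inv:
  "op_linear X \<Longrightarrow> X \<circ> X = opzero \<Longrightarrow> inv (opadd id X) = opadd id (opsmult (-1) X)"
  using unipotent_inverse by (metis inv_unique_comp)

lemma unipotent_commutator: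
  assumes "op_linear X" "op_linear Y" "X \<circ> X = opzero" "Y \<circ> Y = opzero" "Y \<circ> X = opzero"
  shows "opadd id X \<circ> opadd id Y \<circ> opadd id (opsmult (-1) X) \<circ> opadd id (opsmult (-1) Y)
       = opadd id (X \<circ> Y)"
proof -
  have zero: "X (X v) = (\<lambda>m. 0)" "Y (Y v) = (\<lambda>m. 0)" "Y (X v) = (\<lambda>m. 0)" for v
    using assms(3-5) by (metis comp_apply opzero_def)+
  show ?thesis
    by (simp add: zero fun_eq_iff opadd_def opsmult_def
        op_linear_add[OF assms(1)] op_linear_smult[OF assms(1)] op_linear_neg[OF assms(1)]
        op_linear_diff[OF assms(1)] op_linear_zero[OF assms(1)]
        op_linear_add[OF assms(2)] op_linear_smult[OF assms(2)] op_linear_neg[OF assms(2)]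
        op_linear_diff[OF assms(2)] op_linear_zero[OF assms(2)])
qed

section \<open>The subalgebras SS T and the ideal p\<close>

lemma alg_gen_mono: "a \<in> alg_gen G \<Longrightarrow> G \<subseteq> G' \<Longrightarrow> a \<in> alg_gen G'"
  by (induction rule: alg_gen.induct) (auto intro: alg_gen.intros)

lemma SS_mono: "a \<in> SS T \<Longrightarrow> T \<subseteq> T' \<Longrightarrow> a \<in> SS T'"
  unfolding SS_def by (erule alg_gen_mono) auto

lemma Xop_in_SS: "i \<in> T \<Longrightarrow> Xop i \<in> SS T"
  unfolding SS_def by (auto intro: alg_gen.gen)

lemma Yop_in_SS: "i \<in> T \<Longrightarrow> Yop i \<in> SS T"
  unfolding SS_def by (auto intro: alg_gen.gen)

lemma id_in_SS: "id \<in> SS T"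
  unfolding SS_def by (rule alg_gen.one)

lemma opzero_in_SS: "opzero \<in> SS T"
  unfolding SS_def by (rule alg_gen.zero)

lemma comp_in_SS: "a \<in> SS T \<Longrightarrow> b \<in> SS T \<Longrightarrow> a \<circ> b \<in> SS T"
  unfolding SS_def by (rule alg_gen.mult)

lemma opsmult_in_SS: "a \<in> SS T \<Longrightarrow> opsmult c a \<in> SS T"
  unfolding SS_def by (rule alg_gen.smult)

lemma opadd_in_SS: "a \<in> SS T \<Longrightarrow> b \<in> SS T \<Longrightarrow> opadd a b \<in> SS T"
  unfolding SS_def by (rule alg_gen.add)

lemma funpow_in_SS: "f \<in> SS T \<Longrightarrow> f ^^ s \<in> SS T"
  by (induction s) (auto intro: id_in_SS comp_in_SS)

lemma foldr_in_SS: "\<forall>g\<in>set L. g \<in> SS T \<Longrightarrow> foldr (\<circ>) L id \<in> SS T"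
  by (induction L) (auto intro: id_in_SS comp_in_SS)

lemma opsub_eq_opadd: "opsub a b = opadd a (opsmult (-1) b)"
  by (simp add: fun_eq_iff opsub_def opadd_def opsmult_def)

lemma Est_in_SS: "i \<in> T \<Longrightarrow> Est s t i \<in> SS T"
  unfolding Est_def opsub_eq_opadd
  by (intro opadd_in_SS opsmult_in_SS comp_in_SS funpow_in_SS Xop_in_SS Yop_in_SS)

lemma EabI_in_SS: "finite J \<Longrightarrow> J \<subseteq> T \<Longrightarrow> EabI \<alpha> \<beta> J \<in> SS T"
  unfolding EabI_def by (rule foldr_in_SS) (auto intro: Est_in_SS)

lemma p'_ideal_subset_Sn: "i \<in> {1..n-1} \<Longrightarrow> p'_ideal n i \<subseteq> Sn (n-1)"
proof
  fix y assume i: "i \<in> {1..n-1}" and y: "y \<in> p'_ideal n i"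
  from y show "y \<in> Sn (n-1)"
    unfolding p'_ideal_def
  proof induction
    case (gen r s)
    with i show ?case unfolding Sn_def ee_def by (intro comp_in_SS Est_in_SS)
  qed (auto simp: Sn_def intro: opzero_in_SS opadd_in_SS)
qed

lemma pS_subset_Sn: "S \<subseteq> {1..n-1} \<Longrightarrow> pS n S \<subseteq> Sn (n-1)"
proof
  fix x assume S: "S \<subseteq> {1..n-1}" and x: "x \<in> pS n S"
  from x show "x \<in> Sn (n-1)"
    unfolding pS_def
  proof induction
    case (gen a)
    with S p'_ideal_subset_Sn show ?case by blast
  qed (auto simp: Sn_def intro: opzero_in_SS opadd_in_SS)
qed

lemma S_C_subset_Sn: "n \<in> I \<Longrightarrow> S_C n I \<subseteq> Sn (n-1)"
proof -
  assume "n \<in> I"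
  have "{1..n} - I \<subseteq> {1..n-1}"
  proof
    fix x assume "x \<in> {1..n} - I"
    moreover from this have "x \<noteq> n" using \<open>n \<in> I\<close> by blast
    ultimately show "x \<in> {1..n-1}" by (simp, linarith)
  qed
  then show ?thesis unfolding S_C_def Sn_def by (blast intro: SS_mono)
qed

lemma EabI_sandwich_in_pS:
  assumes "finite J" "J \<subseteq> {1..n-1}" "i \<in> J" "i \<in> S" "a \<in> Sn (n-1)" "b \<in> Sn (n-1)"
  shows "opsmult c (a \<circ> EabI \<alpha> \<beta> J \<circ> b) \<in> pS n S"
proof -
  have split: "EabI \<alpha> \<beta> J = EabI \<alpha> \<beta> (J - {i}) \<circ> Est (\<alpha> i) (\<beta> i) i"
    using EabI_insert[of "J - {i}" i \<alpha> \<beta>] assms(1,3) by (simp add: insert_absorb)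
  have eq: "opsmult c (a \<circ> EabI \<alpha> \<beta> J \<circ> b)
      = opsmult c (a \<circ> EabI \<alpha> \<beta> (J - {i}) \<circ> (Xop i ^^ \<alpha> i)) \<circ> ee i \<circ> ((Yop i ^^ \<beta> i) \<circ> b)"
    unfolding split Est_eq_Xop_ee_Yop by (simp add: opsmult_comp comp_assoc)
  have "i \<in> {1..n-1}" "J - {i} \<subseteq> {1..n-1}" using assms(2,3) by auto
  then have "opsmult c (a \<circ> EabI \<alpha> \<beta> (J - {i}) \<circ> (Xop i ^^ \<alpha> i)) \<in> Sn (n-1)"
    and "(Yop i ^^ \<beta> i) \<circ> b \<in> Sn (n-1)"
    using assms(1,5,6) unfolding Sn_def
    by (intro opsmult_in_SS comp_in_SS EabI_in_SS funpow_in_SS Xop_in_SS Yop_in_SS; simp)+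
  then have "opsmult c (a \<circ> EabI \<alpha> \<beta> J \<circ> b) \<in> p'_ideal n i"
    unfolding eq p'_ideal_def by (rule ideal_gen.gen)
  then show ?thesis
    unfolding pS_def by (rule add_span.gen[OF UN_I[OF assms(4)]])
qed

section \<open>The groups E_\<infinity>(S_{n-1}) and E_\<infinity>(S_{n-1}, p)\<close>

text \<open>The elementary matrix 1 + a e_{kl} of GL_\<infinity>(S_{n-1}), seen inside S_n.\<close>

abbreviation transv :: "'k::field op \<Rightarrow> nat \<Rightarrow> nat \<Rightarrow> nat \<Rightarrow> 'k op" where
  "transv a k l n \<equiv> opadd id (a \<circ> Est k l n)"

lemma grp_gen_bij: "g \<in> grp_gen G \<Longrightarrow> \<forall>x\<in>G. bij x \<Longrightarrow> bij g"
  by (induction rule: grp_gen.induct) (auto intro: bij_comp bij_imp_bij_inv)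

lemma grp_gen_conj_closed:
  assumes "x \<in> grp_gen G" "bij a" "\<forall>g\<in>G. bij g" "\<forall>g\<in>G. a \<circ> g \<circ> inv a \<in> G"
  shows "a \<circ> x \<circ> inv a \<in> grp_gen G"
  using assms(1)
proof induction
  case one
  have "a \<circ> inv a = id" using assms(2) bij_is_surj surj_iff by blast
  then show ?case by (metis comp_id grp_gen.one)
next
  case (gen g)
  then show ?case using assms(4) by (blast intro: grp_gen.gen)
next
  case (inv g)
  then have "a \<circ> inv g \<circ> inv a = inv (a \<circ> g \<circ> inv a)"
    using assms(2,3) by (simp add: o_inv_distrib bij_imp_bij_inv inv_inv_eq bij_comp comp_assoc)
  then show ?case using inv assms(4) by (metis grp_gen.inv)
next
  case (mult x y)
  have "a \<circ> (x \<circ> y) \<circ> inv a = (a \<circ> x \<circ> inv a) \<circ> (a \<circ> y \<circ> inv a)"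
    using assms(2) by (simp add: fun_eq_iff bij_is_inj)
  then show ?case using mult by (metis grp_gen.mult)
qed

lemma Sn_commute_Est: "a \<in> Sn (n-1) \<Longrightarrow> 0 < n \<Longrightarrow> a \<circ> Est s t n = Est s t n \<circ> a"
  unfolding Sn_def by (erule SS_commute_Est) simp

lemma Sn_transv_square_zero:
  "a \<in> Sn (n-1) \<Longrightarrow> k \<noteq> l \<Longrightarrow> 0 < n \<Longrightarrow> (a \<circ> Est k l n) \<circ> (a \<circ> Est k l n) = opzero"
  by (rule comp_square_zero) (auto simp: Sn_def op_linear_SS Sn_commute_Est Est_comp_Est)

lemma op_linear_Sn_Est: "a \<in> Sn (n-1) \<Longrightarrow> op_linear (a \<circ> Est k l n)"
  unfolding Sn_def by (intro op_linear_comp op_linear_SS op_linear_Est)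

lemma transv_bij: "a \<in> Sn (n-1) \<Longrightarrow> k \<noteq> l \<Longrightarrow> 0 < n \<Longrightarrow> bij (transv a k l n)"
  by (intro unipotent_bij op_linear_Sn_Est Sn_transv_square_zero)

lemma transv_inv:
  "a \<in> Sn (n-1) \<Longrightarrow> k \<noteq> l \<Longrightarrow> 0 < n \<Longrightarrow> inv (transv a k l n) = transv (opsmult (-1) a) k l n"
  by (simp add: unipotent_inv op_linear_Sn_Est Sn_transv_square_zero opsmult_comp)

lemma transv_in_Einf: "a \<in> Sn (n-1) \<Longrightarrow> k \<noteq> l \<Longrightarrow> transv a k l n \<in> Einf n"
  unfolding Einf_def by (rule grp_gen.gen) blast

lemma Einf_bij: "g \<in> Einf n \<Longrightarrow> 0 < n \<Longrightarrow> bij g"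
  unfolding Einf_def by (erule grp_gen_bij) (auto intro: transv_bij)

lemma Einf_id: "id \<in> Einf n"
  unfolding Einf_def by (rule grp_gen.one)

lemma Einf_comp: "a \<in> Einf n \<Longrightarrow> b \<in> Einf n \<Longrightarrow> a \<circ> b \<in> Einf n"
  unfolding Einf_def by (rule grp_gen.mult)

lemma foldr_in_Einf: "\<forall>h\<in>set L. h \<in> Einf n \<Longrightarrow> foldr (\<circ>) L id \<in> Einf n"
  by (induction L) (auto intro: Einf_id Einf_comp)

lemma Einf_rel_conj_transv:
  "h \<in> Einf n \<Longrightarrow> a \<in> p \<Longrightarrow> k \<noteq> l \<Longrightarrow> h \<circ> transv a k l n \<circ> inv h \<in> Einf_rel n p"
  unfolding Einf_rel_def by (rule grp_gen.gen) blast

lemma transv_in_Einf_rel: "a \<in> p \<Longrightarrow> k \<noteq> l \<Longrightarrow> transv a k l n \<in> Einf_rel n p"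
  using Einf_rel_conj_transv[OF Einf_id] by fastforce

lemma Einf_rel_id: "id \<in> Einf_rel n p"
  unfolding Einf_rel_def by (rule grp_gen.one)

lemma Einf_rel_comp: "a \<in> Einf_rel n p \<Longrightarrow> b \<in> Einf_rel n p \<Longrightarrow> a \<circ> b \<in> Einf_rel n p"
  unfolding Einf_rel_def by (rule grp_gen.mult)

lemma foldr_in_Einf_rel: "\<forall>h\<in>set L. h \<in> Einf_rel n p \<Longrightarrow> foldr (\<circ>) L id \<in> Einf_rel n p"
  by (induction L) (auto intro: Einf_rel_id Einf_rel_comp)

lemma Einf_rel_normal:
  assumes "g \<in> Einf_rel n p" "a \<in> Einf n" "p \<subseteq> Sn (n-1)" "0 < n"
  shows "a \<circ> g \<circ> inv a \<in> Einf_rel n p"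
proof -
  let ?G = "{h \<circ> transv b k l n \<circ> inv h | h b k l. h \<in> Einf n \<and> b \<in> p \<and> k \<noteq> l}"
  have a: "bij a" using assms(2,4) by (rule Einf_bij)
  have "\<forall>x\<in>?G. bij x"
    using assms(3,4) by (blast intro: bij_comp bij_imp_bij_inv Einf_bij transv_bij)
  moreover have "\<forall>x\<in>?G. a \<circ> x \<circ> inv a \<in> ?G"
  proof
    fix x assume "x \<in> ?G"
    then obtain h b k l where x: "x = h \<circ> transv b k l n \<circ> inv h"
      and h: "h \<in> Einf n" and "b \<in> p" "k \<noteq> l" by blast
    have "a \<circ> x \<circ> inv a = (a \<circ> h) \<circ> transv b k l n \<circ> inv (a \<circ> h)"
      using a Einf_bij[OF h assms(4)] by (simp add: x o_inv_distrib comp_assoc)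
    moreover have "a \<circ> h \<in> Einf n" using assms(2) h by (rule Einf_comp)
    ultimately show "a \<circ> x \<circ> inv a \<in> ?G" using \<open>b \<in> p\<close> \<open>k \<noteq> l\<close> by blast
  qed
  ultimately show ?thesis
    using grp_gen_conj_closed[OF assms(1)[unfolded Einf_rel_def] a] unfolding Einf_rel_def by blast
qed

lemma transv_diag_in_Einf_rel:
  assumes n: "0 < n" and p: "p \<subseteq> Sn (n-1)" and c: "c \<in> p" "opsmult (-1) c \<in> p"
    and q: "q \<in> Sn (n-1)" and qc: "q \<circ> c = opzero"
  shows "transv (c \<circ> q) t t n \<in> Einf_rel n p"
proof -
  define u where "u = Suc t"
  have tu: "t \<noteq> u" "u \<noteq> t" by (simp_all add: u_def)
  have cS: "c \<in> Sn (n-1)" using c p by blast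
  let ?X = "c \<circ> Est t u n" and ?Y = "q \<circ> Est u t n"
  have c_comm: "c \<circ> Est k l n = Est k l n \<circ> c" and q_comm: "q \<circ> Est k l n = Est k l n \<circ> q" for k l
    using Sn_commute_Est cS q n by blast+
  have "?Y \<circ> ?X = q \<circ> (Est u t n \<circ> c) \<circ> Est t u n" by (simp add: comp_assoc)
  also have "\<dots> = (q \<circ> c) \<circ> Est u t n \<circ> Est t u n" by (simp only: c_comm comp_assoc)
  finally have YX: "?Y \<circ> ?X = opzero" by (simp add: qc)
  have "?X \<circ> ?Y = c \<circ> (Est t u n \<circ> q) \<circ> Est u t n" by (simp add: comp_assoc)
  also have "\<dots> = (c \<circ> q) \<circ> (Est t u n \<circ> Est u t n)" by (simp only: q_comm[symmetric] comp_assoc)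
  finally have XY: "?X \<circ> ?Y = (c \<circ> q) \<circ> Est t t n" by (simp add: Est_comp_Est)
  have "transv c t u n \<circ> transv q u t n \<circ> transv (opsmult (-1) c) t u n \<circ> transv (opsmult (-1) q) u t n
      = transv (c \<circ> q) t t n"
    using unipotent_commutator[OF op_linear_Sn_Est[OF cS] op_linear_Sn_Est[OF q]
        Sn_transv_square_zero[OF cS tu(1) n] Sn_transv_square_zero[OF q tu(2) n] YX]
    by (simp add: XY opsmult_comp)
  then have "transv (c \<circ> q) t t n
      = transv c t u n \<circ> (transv q u t n \<circ> transv (opsmult (-1) c) t u n \<circ> inv (transv q u t n))"
    by (simp add: transv_inv[OF q tu(2) n] comp_assoc)
  moreover have "transv c t u n \<in> Einf_rel n p" using c(1) tu(1) by (rule transv_in_Einf_rel)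
  moreover have "transv q u t n \<circ> transv (opsmult (-1) c) t u n \<circ> inv (transv q u t n) \<in> Einf_rel n p"
    using transv_in_Einf[OF q tu(2)] c(2) tu(1) by (rule Einf_rel_conj_transv)
  ultimately show ?thesis by (simp add: Einf_rel_comp)
qed

definition commutator :: "('a \<Rightarrow> 'a) \<Rightarrow> ('a \<Rightarrow> 'a) \<Rightarrow> 'a \<Rightarrow> 'a" where
  "commutator g h = g \<circ> h \<circ> inv g \<circ> inv h"

lemma commutator_comp:
  assumes "bij g" "bij h" "bij h'"
  shows "commutator g (h \<circ> h') = commutator g h \<circ> (h \<circ> commutator g h' \<circ> inv h)"
  using assms unfolding commutator_def o_inv_distrib[OF assms(2,3)]
  by (simp add: comp_def bij_is_inj inv_f_f)

lemma commutator_foldr_in_Einf_rel: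
  assumes "bij g" "p \<subseteq> Sn (n-1)" "0 < n"
  shows "\<forall>h\<in>set L. h \<in> Einf n \<and> commutator g h \<in> Einf_rel n p \<Longrightarrow>
    commutator g (foldr (\<circ>) L id) \<in> Einf_rel n p"
proof (induction L)
  case Nil
  have "g \<circ> inv g = id" using assms(1) bij_is_surj surj_iff by blast
  then show ?case
    unfolding commutator_def by (metis Einf_rel_id comp_id foldr.simps(1) id_apply inv_id)
next
  case (Cons h L)
  then have h: "h \<in> Einf n" "commutator g h \<in> Einf_rel n p"
    and hs: "\<forall>h\<in>set L. h \<in> Einf n \<and> commutator g h \<in> Einf_rel n p" by simp_all
  have L: "foldr (\<circ>) L id \<in> Einf n" using hs by (blast intro: foldr_in_Einf)
  have "commutator g (foldr (\<circ>) L id) \<in> Einf_rel n p" by (rule Cons.IH[OF hs])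
  then have "h \<circ> commutator g (foldr (\<circ>) L id) \<circ> inv h \<in> Einf_rel n p"
    by (rule Einf_rel_normal[OF _ h(1) assms(2,3)])
  then have "commutator g h \<circ> (h \<circ> commutator g (foldr (\<circ>) L id) \<circ> inv h) \<in> Einf_rel n p"
    by (rule Einf_rel_comp[OF h(2)])
  moreover have "foldr (\<circ>) (h # L) id = h \<circ> foldr (\<circ>) L id" by simp
  ultimately show ?case
    by (simp only: commutator_comp[OF assms(1) Einf_bij[OF h(1) assms(3)] Einf_bij[OF L assms(3)]])
qed

section \<open>Generators of E_\<infinity>(S_{CI})\<close>

lemma EabI_diag_comp_offdiag:
  assumes a: "a \<in> SS T" and J: "finite J" "J \<inter> T = {}" and \<alpha>\<beta>: "\<exists>k\<in>J. \<beta> k \<noteq> \<alpha> k"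
  shows "EabI \<beta> \<beta> J \<circ> (a \<circ> EabI \<alpha> \<beta> J) = opzero"
proof -
  have "EabI \<beta> \<beta> J \<circ> (a \<circ> EabI \<alpha> \<beta> J) = a \<circ> (EabI \<beta> \<beta> J \<circ> EabI \<alpha> \<beta> J)"
    by (metis SS_commute_EabI[OF a J] comp_assoc)
  also have "\<dots> = opzero"
    using \<alpha>\<beta> by (auto simp: EabI_comp_EabI[OF J(1)] comp_opzero[OF op_linear_SS[OF a]])
  finally show ?thesis .
qed

lemma EabI_transv_in_Einf_rel:
  assumes n: "0 < n" and S: "S \<subseteq> {1..n-1}" and I: "I \<subseteq> {1..n}" "n \<in> I" "i \<in> I" "i \<in> S"
    and a: "a \<in> S_C n I" and \<alpha>\<beta>: "\<exists>k\<in>I. \<alpha> k \<noteq> \<beta> k"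
  shows "opadd id (a \<circ> EabI \<alpha> \<beta> I) \<in> Einf_rel n (pS n S)"
proof -
  let ?I' = "I - {n}"
  have I': "finite ?I'" "?I' \<subseteq> {1..n-1}" "i \<in> ?I'"
    using I S n by (auto intro: finite_subset)
  have aS: "a \<in> SS ({1..n} - I)" using a by (simp add: S_C_def)
  have aSn: "a \<in> Sn (n-1)" using S_C_subset_Sn[OF I(2)] a by blast
  let ?c = "a \<circ> EabI \<alpha> \<beta> ?I'"
  have c_in_pS: "opsmult \<mu> ?c \<in> pS n S" for \<mu>
    using EabI_sandwich_in_pS[OF I' I(4) aSn id_in_SS[of "{1..n-1}", folded Sn_def]] by simp
  have "EabI \<alpha> \<beta> I = EabI \<alpha> \<beta> ?I' \<circ> Est (\<alpha> n) (\<beta> n) n"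
    using EabI_insert[OF I'(1), of n \<alpha> \<beta>] I(2) by (simp add: insert_absorb)
  then have split: "a \<circ> EabI \<alpha> \<beta> I = ?c \<circ> Est (\<alpha> n) (\<beta> n) n"
    by (metis comp_assoc)
  show ?thesis
  proof (cases "\<alpha> n = \<beta> n")
    case False
    show ?thesis unfolding split by (rule transv_in_Einf_rel[OF c_in_pS[of 1, simplified] False])
  next
    case True
    let ?q = "EabI \<beta> \<beta> ?I'"
    have q: "?q \<in> Sn (n-1)" unfolding Sn_def by (rule EabI_in_SS[OF I'(1,2)])
    have "\<exists>k\<in>?I'. \<beta> k \<noteq> \<alpha> k" using \<alpha>\<beta> True by (metis DiffI singletonD)
    then have qc: "?q \<circ> ?c = opzero" by (intro EabI_diag_comp_offdiag[OF aS I'(1)]) blast+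
    have "?c \<circ> ?q = a \<circ> EabI \<alpha> \<beta> ?I'"
      by (simp add: comp_assoc EabI_comp_EabI[OF I'(1)])
    then show ?thesis
      using transv_diag_in_Einf_rel[OF n pS_subset_Sn[OF S] c_in_pS[of 1, simplified] c_in_pS[of "-1"]
          q qc, of "\<alpha> n"]
      unfolding split True by (simp add: opsmult_comp)
  qed
qed

lemma Einf_C_subset_Einf_rel:
  assumes n: "0 < n" and S: "S \<subseteq> {1..n-1}" and "I \<in> JJ n S"
  shows "Einf_C n I \<subseteq> Einf_rel n (pS n S)"
proof
  obtain i where I: "I \<subseteq> {1..n}" "n \<in> I" "i \<in> I" "i \<in> S"
    using \<open>I \<in> JJ n S\<close> unfolding JJ_def by blast
  then have fI: "finite I" by (blast intro: finite_subset)
  fix g assume "g \<in> Einf_C n I"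
  then show "g \<in> Einf_rel n (pS n S)"
    unfolding Einf_C_def
  proof induction
    case one
    show ?case by (rule Einf_rel_id)
  next
    case (gen g)
    then show ?case using EabI_transv_in_Einf_rel[OF n S I] by blast
  next
    case (inv g)
    then obtain a \<alpha> \<beta> where g: "g = opadd id (a \<circ> EabI \<alpha> \<beta> I)"
      and a: "a \<in> S_C n I" and \<alpha>\<beta>: "\<exists>k\<in>I. \<alpha> k \<noteq> \<beta> k" by blast
    have aS: "a \<in> SS ({1..n} - I)" using a by (simp add: S_C_def)
    have "EabI \<alpha> \<beta> I \<circ> EabI \<alpha> \<beta> I = opzero"
      using \<alpha>\<beta> by (auto simp: EabI_comp_EabI[OF fI])
    then have "(a \<circ> EabI \<alpha> \<beta> I) \<circ> (a \<circ> EabI \<alpha> \<beta> I) = opzero"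
      by (intro comp_square_zero op_linear_SS[OF aS] SS_commute_EabI[OF aS fI]) auto
    then have "inv g = opadd id (opsmult (-1) a \<circ> EabI \<alpha> \<beta> I)"
      by (simp add: g unipotent_inv op_linear_comp op_linear_SS[OF aS] op_linear_EabI[OF fI] opsmult_comp)
    moreover have "opsmult (-1) a \<in> S_C n I" using aS by (simp add: S_C_def opsmult_in_SS)
    ultimately show ?case using EabI_transv_in_Einf_rel[OF n S I _ \<alpha>\<beta>] by simp
  next
    case (mult g h)
    show ?case using mult.IH by (rule Einf_rel_comp)
  qed
qed

section \<open>The elements \<mu>_I(\<lambda>)\<close>

lemma muI_inverse:
  assumes "finite F" "c \<noteq> 0"
  shows "muI F c \<circ> muI F (inverse c) = id" "muI F (inverse c) \<circ> muI F c = id"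
  using assms by (auto simp: fun_eq_iff muI_apply)

lemma muI_bij: "finite F \<Longrightarrow> c \<noteq> 0 \<Longrightarrow> bij (muI F c)"
  using muI_inverse by (metis o_bij)

lemma muI_inv: "finite F \<Longrightarrow> c \<noteq> 0 \<Longrightarrow> inv (muI F c) = muI F (inverse c)"
  using muI_inverse by (metis inv_unique_comp)

definition xy_monom :: "'k::field \<Rightarrow> nat \<Rightarrow> nat \<Rightarrow> nat \<Rightarrow> 'k op" where
  "xy_monom a p q j = opsmult a ((Xop j ^^ p) \<circ> (Yop j ^^ q))"

lemma xy_monom_in_Sn: "j \<in> {1..n-1} \<Longrightarrow> xy_monom a p q j \<in> Sn (n-1)"
  unfolding xy_monom_def Sn_def by (intro opsmult_in_SS comp_in_SS funpow_in_SS Xop_in_SS Yop_in_SS)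

lemma opsmult_xy_monom: "opsmult (-1) (xy_monom a p q j) = xy_monom (- a) p q j"
  by (simp add: fun_eq_iff xy_monom_def opsmult_def)

lemma muI_conj_transv:
  fixes c :: "'k::field"
  assumes "c \<noteq> 0" "j \<notin> F" "n \<notin> F" "j \<noteq> n" "finite F" "{k, l} = {0, 1}"
  shows "muI (insert n F) c \<circ> transv (xy_monom a p q j) k l n \<circ> muI (insert n F) (inverse c)
           \<circ> transv (xy_monom (- a) p q j) k l n
       = transv (opsmult (if k = 0 then c - 1 else inverse c - 1) (eI F \<circ> xy_monom a p q j)) k l n"
  using assms
  by (auto simp: fun_eq_iff muI_apply eI_apply opadd_def opsmult_def Est_apply xy_monom_def
      Xop_pow_apply Yop_pow_apply doubleton_eq_iff field_simps simp del: funpow.simps)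

lemma commutator_muI_transv_in_Einf_rel:
  assumes n: "0 < n" and F: "finite F" "F \<subseteq> {1..n-1}" "i \<in> F" "i \<in> S"
    and j: "j \<in> {1..n-1}" "j \<notin> F" and c: "c \<noteq> 0" and kl: "{k, l} = {0, 1}"
  shows "commutator (muI (insert n F) c) (transv (xy_monom a p q j) k l n) \<in> Einf_rel n (pS n S)"
proof -
  have r: "xy_monom a p q j \<in> Sn (n-1)" using j(1) by (rule xy_monom_in_Sn)
  have "k \<noteq> l" using kl by (auto simp: doubleton_eq_iff)
  have "n \<notin> F" "j \<noteq> n" using F(2) j(1) n by auto
  then have "commutator (muI (insert n F) c) (transv (xy_monom a p q j) k l n)
      = transv (opsmult (if k = 0 then c - 1 else inverse c - 1) (eI F \<circ> xy_monom a p q j)) k l n"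
    unfolding commutator_def muI_inv[OF finite.insertI[OF F(1)] c] transv_inv[OF r \<open>k \<noteq> l\<close> n] opsmult_xy_monom
    by (rule muI_conj_transv[OF c j(2) _ _ F(1) kl])
  moreover have "opsmult \<gamma> (eI F \<circ> xy_monom a p q j) \<in> pS n S" for \<gamma>
    using EabI_sandwich_in_pS[OF F id_in_SS[of "{1..n-1}", folded Sn_def] r] by (simp add: eI_eq_EabI)
  ultimately show ?thesis using \<open>k \<noteq> l\<close> by (simp add: transv_in_Einf_rel)
qed

text \<open>An entry (a, p, q, k, l) stands for 1 + a x_j^p y_j^q e_{kl}.  The product is w(x_j) w(-1),
  where w(u) = e_{01}(u) e_{10}(-u') e_{01}(u) for a left inverse u' of u (here y_j of x_j).\<close>

definition weyl_factors :: "('k::field \<times> nat \<times> nat \<times> nat \<times> nat) list" where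
  "weyl_factors = [(1, 1, 0, 0, 1), (-1, 0, 1, 1, 0), (1, 1, 0, 0, 1), (-1, 0, 0, 0, 1), (1, 0, 0, 1, 0), (-1, 0, 0, 0, 1)]"

definition weyl_prod :: "nat \<Rightarrow> nat \<Rightarrow> 'k::field op" where
  "weyl_prod j n = foldr (\<circ>) (map (\<lambda>(a, p, q, k, l). transv (xy_monom a p q j) k l n) weyl_factors) id"

lemma weyl_prod_apply:
  "j \<noteq> n \<Longrightarrow> (weyl_prod j n :: 'k::field op) v = (\<lambda>m.
     if m n = 0 then Xop j v m - (if m j = 0 then v (m(n := 1)) else 0)
     else if m n = 1 then v (m(j := m j + 1)) else v m)"
  by (auto simp: fun_eq_iff weyl_prod_def weyl_factors_def xy_monom_def opadd_def opsmult_def Est_apply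
      Xop_pow_apply Yop_pow_apply Xop_def fun_upd_twist fun_upd_idem simp del: funpow.simps)

lemma muI_weyl_prod:
  fixes c :: "'k::field"
  assumes "c \<noteq> 0" "j \<notin> F" "n \<notin> F" "j \<noteq> n" "finite F"
  shows "muI (insert j (insert n F)) c \<circ> weyl_prod j n
       = muI (insert n F) c \<circ> weyl_prod j n \<circ> muI (insert n F) (inverse c)"
  using assms by (auto simp: fun_eq_iff muI_apply weyl_prod_apply Xop_def field_simps)

lemma muI_in_Einf_rel:
  assumes n: "0 < n" and S: "S \<subseteq> {1..n-1}" and I: "I \<subseteq> {1..n}" "n \<in> I" "i \<in> I" "i \<in> S"
    and j: "j \<in> I" "j \<noteq> n" "j \<noteq> i" and c: "c \<noteq> 0"
  shows "muI I c \<in> Einf_rel n (pS n S)"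
proof -
  define F where "F = I - {j, n}"
  have F: "finite F" "F \<subseteq> {1..n-1}" "i \<in> F" "j \<notin> F" "n \<notin> F"
    using I j S n by (auto simp: F_def intro: finite_subset)
  have I_eq: "I = insert j (insert n F)" using I j by (auto simp: F_def)
  have "1 \<le> j" "j \<le> n" using I(1) j(1) by auto
  with j(2) have "j \<in> {1..n-1}" by simp
  let ?D = "muI (insert n F) c"
  have D: "bij ?D" "inv ?D = muI (insert n F) (inverse c)"
    using F(1) c by (simp_all add: muI_bij muI_inv)
  let ?factors = "map (\<lambda>(a, p, q, k, l). transv (xy_monom a p q j) k l n) weyl_factors"
  have factors: "\<forall>h\<in>set ?factors. h \<in> Einf n \<and> commutator ?D h \<in> Einf_rel n (pS n S)"
    by (auto simp: weyl_factors_def insert_commute intro!: transv_in_Einf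
        xy_monom_in_Sn[OF \<open>j \<in> {1..n-1}\<close>]
        commutator_muI_transv_in_Einf_rel[OF n F(1-3) I(4) \<open>j \<in> {1..n-1}\<close> F(4) c])
  then have "commutator ?D (weyl_prod j n) \<in> Einf_rel n (pS n S)"
    unfolding weyl_prod_def by (rule commutator_foldr_in_Einf_rel[OF D(1) pS_subset_Sn[OF S] n])
  moreover have "weyl_prod j n \<in> Einf n"
    unfolding weyl_prod_def
    by (rule foldr_in_Einf) (auto simp: weyl_factors_def intro!: transv_in_Einf xy_monom_in_Sn[OF \<open>j \<in> {1..n-1}\<close>])
  then have "bij (weyl_prod j n)" using n by (rule Einf_bij)
  then have "muI I c = muI I c \<circ> weyl_prod j n \<circ> inv (weyl_prod j n)"
    by (metis bij_is_surj comp_assoc comp_id surj_iff)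
  ultimately show ?thesis
    unfolding commutator_def D(2) I_eq muI_weyl_prod[OF c F(4,5) j(2) F(1)] by simp
qed

lemma U_I_subset_Einf_rel:
  assumes n: "0 < n" and S: "S \<subseteq> {1..n-1}" and "I \<in> JJ n S" "3 \<le> card I"
  shows "U_I I \<subseteq> Einf_rel n (pS n S)"
proof
  obtain i where I: "I \<subseteq> {1..n}" "n \<in> I" "i \<in> I" "i \<in> S"
    using \<open>I \<in> JJ n S\<close> unfolding JJ_def by blast
  have "\<not> I \<subseteq> {n, i}"
  proof
    assume "I \<subseteq> {n, i}"
    then have "card I \<le> card {n, i}" by (rule card_mono[rotated]) simp
    also have "\<dots> \<le> 2" by (simp add: card_insert_if)
    finally have "card I \<le> 2" .
    with \<open>3 \<le> card I\<close> show False by simp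
  qed
  then obtain j where j: "j \<in> I" "j \<noteq> n" "j \<noteq> i" by blast
  fix u assume "u \<in> U_I I"
  then obtain c where "u = muI I c" "c \<noteq> 0" unfolding U_I_def by blast
  then show "u \<in> Einf_rel n (pS n S)" using muI_in_Einf_rel[OF n S I j] by simp
qed

lemma Etilde_subset_Einf_rel:
  assumes n: "0 < n" and S: "S \<subseteq> {1..n-1}" and "3 \<le> s"
  shows "Etilde n S s \<subseteq> Einf_rel n (pS n S)"
proof
  fix x assume "x \<in> Etilde n S s"
  then obtain L g where x: "x = foldr (\<circ>) (map g L) id"
    and L: "set L = {I \<in> JJ n S. card I = s}"
    and g: "\<forall>I\<in>set L. \<exists>u\<in>U_I I. \<exists>h\<in>Einf_C n I. g I = u \<circ> h"
    unfolding Etilde_def by blast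
  have "g I \<in> Einf_rel n (pS n S)" if "I \<in> set L" for I
  proof -
    obtain u h where u: "u \<in> U_I I" and h: "h \<in> Einf_C n I" and gI: "g I = u \<circ> h"
      using g \<open>I \<in> set L\<close> by blast
    have I: "I \<in> JJ n S" "3 \<le> card I" using L \<open>I \<in> set L\<close> \<open>3 \<le> s\<close> by auto
    have "u \<in> Einf_rel n (pS n S)" using U_I_subset_Einf_rel[OF n S I] u by blast
    moreover have "h \<in> Einf_rel n (pS n S)" using Einf_C_subset_Einf_rel[OF n S I(1)] h by blast
    ultimately show ?thesis unfolding gI by (rule Einf_rel_comp)
  qed
  then show "x \<in> Einf_rel n (pS n S)" unfolding x by (intro foldr_in_Einf_rel) simp
qed

theorem lemma5p4:
  fixes n :: nat and S :: "nat set"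
  assumes "n \<ge> 3" and "S \<noteq> {}" and "S \<subseteq> {1..n-1}"
  shows "(\<forall>I\<in>JJ n S. 2 \<le> card I \<and> card I \<le> n - 1 \<longrightarrow>
            (Einf_C n I :: 'k::field op set) \<subseteq> Einf_rel n (pS n S))
       \<and> (\<forall>I\<in>JJ n S. 3 \<le> card I \<and> card I \<le> n - 1 \<longrightarrow>
            (U_I I :: 'k::field op set) \<subseteq> Einf_rel n (pS n S))
       \<and> (\<forall>s. 3 \<le> s \<and> s \<le> n - 1 \<longrightarrow>
            (Etilde n S s :: 'k::field op set) \<subseteq> Einf_rel n (pS n S))"
proof -
  have n: "0 < n" using assms(1) by simp
  show ?thesis
  proof (intro conjI ballI allI impI)
    fix I assume I: "I \<in> JJ n S"
    then show "Einf_C n I \<subseteq> Einf_rel n (pS n S)" by (rule Einf_C_subset_Einf_rel[OF n assms(3)])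
    assume "3 \<le> card I \<and> card I \<le> n - 1"
    with I show "U_I I \<subseteq> Einf_rel n (pS n S)" by (intro U_I_subset_Einf_rel[OF n assms(3)]) simp_all
  next
    fix s :: nat assume "3 \<le> s \<and> s \<le> n - 1"
    then show "Etilde n S s \<subseteq> Einf_rel n (pS n S)" by (intro Etilde_subset_Einf_rel[OF n assms(3)]) simp
  qed
qed

end
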